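(* Let $A\in\mathrm{GL}(n,2)$ have columns $\mathbf{a}_1,\dots,\mathbf{a}_n$, let $\rho$ be an $n$-qubit state, $\varepsilon>0$, $\delta\in(0,1)$. For each $i$, measure $g(\mathbf{a}_i)$ on $m_i$ independent copies of $\rho$, recording outcomes $Y_{i,j}\in\{0,1\}$ ($1$ for outcome $+1$, $0$ for $-1$), all mutually independent, and set $\widehat a_i=\frac1{m_i}\sum_j Y_{i,j}$ and $\widehat U_A=\min_i\widehat a_i$. If $m_i\ge\lceil \log(2n/\delta)/(2\varepsilon^2)\rceil$ for every $i$, then with probability at least $1-\delta$, $$F(\rho,\psi)\le\widehat U_A+\varepsilon.$$ In particular, taking $m_i=\lceil \log(2n/\delta)/(2\varepsilon^2)\rceil$ for all $i$, this certificate uses a total of $M_u=n\lceil \log(2n/\delta)/(2\varepsilon^2)\rceil$ copies of $\rho$.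
   Context: Setting: $|\psi\rangle$ is an $n$-qubit stabilizer state whose stabilizer group is generated by independent commuting Pauli operators $g_1,\dots,g_n$; for $\mathbf{u}\in\mathbb{F}_2^n$, $g(\mathbf{u})=\prod_j g_j^{u_j}$. $F(\rho,\psi)=\langle\psi|\rho|\psi\rangle$ is the fidelity. $\mathrm{GL}(n,2)$ is the group of invertible binary $n\times n$ matrices. $\log$ is the natural logarithm. *)

theory Defs
  imports "HOL-Probability.Probability" "HOL-Library.Z2" "Jordan_Normal_Form.Matrix"
begin

datatype pauli1 = PI | PX | PY | PZ

text \<open>Entry (r,c) of a single-qubit Pauli matrix; rows/columns indexed by bits
  (False = basis state 0, True = basis state 1).\<close>
fun pauli1_entry :: "pauli1 \<Rightarrow> bool \<Rightarrow> bool \<Rightarrow> complex" where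
  "pauli1_entry PI r c = (if r = c then 1 else 0)"
| "pauli1_entry PX r c = (if r \<noteq> c then 1 else 0)"
| "pauli1_entry PY r c = (if r = c then 0 else if r then \<i> else - \<i>)"
| "pauli1_entry PZ r c = (if r \<noteq> c then 0 else if r then -1 else 1)"

text \<open>The 2^n x 2^n matrix of the Pauli operator ph * P_0 (x) ... (x) P_(n-1),
  the k-th bit of a basis index being the state of qubit k (tensor product written entrywise).\<close>
definition pauli_mat :: "nat \<Rightarrow> complex \<Rightarrow> (nat \<Rightarrow> pauli1) \<Rightarrow> complex mat" where
  "pauli_mat n ph P = mat (2^n) (2^n)
     (\<lambda>(r, c). ph * (\<Prod>k<n. pauli1_entry (P k) (odd (r div 2^k)) (odd (c div 2^k))))"

definition is_pauli :: "nat \<Rightarrow> complex mat \<Rightarrow> bool" where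
  "is_pauli n G \<longleftrightarrow> (\<exists>ph P. ph \<in> {1, -1, \<i>, -\<i>} \<and> G = pauli_mat n ph P)"

fun gen_prod :: "nat \<Rightarrow> (nat \<Rightarrow> complex mat) \<Rightarrow> bit vec \<Rightarrow> nat \<Rightarrow> complex mat" where
  "gen_prod N g u 0 = 1\<^sub>m N"
| "gen_prod N g u (Suc j) = gen_prod N g u j * (if u $ j = 1 then g j else 1\<^sub>m N)"

definition g_of :: "nat \<Rightarrow> (nat \<Rightarrow> complex mat) \<Rightarrow> bit vec \<Rightarrow> complex mat" where
  "g_of n g u = gen_prod (2^n) g u n"

definition stabilizer_state :: "nat \<Rightarrow> (nat \<Rightarrow> complex mat) \<Rightarrow> complex vec \<Rightarrow> bool" where
  "stabilizer_state n g \<psi> \<longleftrightarrow>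
     \<psi> \<in> carrier_vec (2^n) \<and> \<psi> \<bullet>c \<psi> = 1 \<and>
     (\<forall>j<n. is_pauli n (g j)) \<and>
     (\<forall>j<n. \<forall>k<n. g j * g k = g k * g j) \<and>
     (\<forall>u \<in> carrier_vec n. u \<noteq> 0\<^sub>v n \<longrightarrow> g_of n g u \<noteq> 1\<^sub>m (2^n)) \<and>
     (\<forall>j<n. g j *\<^sub>v \<psi> = \<psi>)"

definition mtrace :: "complex mat \<Rightarrow> complex" where
  "mtrace M = (\<Sum>i<dim_row M. M $$ (i, i))"

definition density_matrix :: "nat \<Rightarrow> complex mat \<Rightarrow> bool" where
  "density_matrix n \<rho> \<longleftrightarrow> \<rho> \<in> carrier_mat (2^n) (2^n) \<and> mtrace \<rho> = 1 \<and>
     (\<forall>v \<in> carrier_vec (2^n). 0 \<le> (\<rho> *\<^sub>v v) \<bullet>c v)"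

definition fidelity :: "complex mat \<Rightarrow> complex vec \<Rightarrow> real" where
  "fidelity \<rho> \<psi> = Re ((\<rho> *\<^sub>v \<psi>) \<bullet>c \<psi>)"

text \<open>Born-rule probability of outcome +1 when measuring the Pauli observable G on rho:
  tr(rho (I + G)/2).\<close>
definition plus_prob :: "nat \<Rightarrow> complex mat \<Rightarrow> complex mat \<Rightarrow> real" where
  "plus_prob n \<rho> G = Re (mtrace (\<rho> * ((1/2) \<cdot>\<^sub>m (1\<^sub>m (2^n) + G))))"

text \<open>Joint law of the mutually independent outcomes Y(i,j) (True = outcome +1),
  i < n, j < m i, where Y(i,j) comes from measuring g(a_i) on a fresh copy of rho.\<close>
definition outcomes :: "nat \<Rightarrow> bit mat \<Rightarrow> (nat \<Rightarrow> complex mat) \<Rightarrow> complex mat \<Rightarrow> (nat \<Rightarrow> nat)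
    \<Rightarrow> (nat \<times> nat \<Rightarrow> bool) pmf" where
  "outcomes n A g \<rho> m = Pi_pmf {(i, j). i < n \<and> j < m i} False
     (\<lambda>(i, j). bernoulli_pmf (plus_prob n \<rho> (g_of n g (col A i))))"

definition a_hat :: "(nat \<Rightarrow> nat) \<Rightarrow> (nat \<times> nat \<Rightarrow> bool) \<Rightarrow> nat \<Rightarrow> real" where
  "a_hat m Y i = (\<Sum>j<m i. of_bool (Y (i, j))) / real (m i)"

definition U_hat :: "nat \<Rightarrow> (nat \<Rightarrow> nat) \<Rightarrow> (nat \<times> nat \<Rightarrow> bool) \<Rightarrow> real" where
  "U_hat n m Y = Min (a_hat m Y ` {..<n})"

end

theory Submission
  imports Defs
begin

(*
  Every element G = g(u) of the stabilizer group is a Hermitian involution fixing psi: it is a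
  product of commuting Hermitian involutions, because a Pauli generator fixing a nonzero vector
  must have phase +1 or -1.  Hence P = (1 + G)/2 is an orthogonal projection with P psi = psi, so
  P - |psi><psi| and 1 - P are projections too, and tr(rho Q) >= 0 for every projection Q gives
  F(rho, psi) <= tr(rho P) <= 1, where tr(rho P) is the probability of outcome +1.
  Each a_hat_i is therefore the mean of m_i Bernoulli samples with success probability
  p_i >= F(rho, psi).  Hoeffding's inequality bounds Pr[a_hat_i <= p_i - eps] by
  exp(-2 m_i eps^2) <= delta/(2n), and a union bound over i shows that with probability at least
  1 - delta/2 all a_hat_i, hence their minimum, exceed F(rho, psi) - eps.
*)

section \<open>Hermitian matrices and orthogonal projections\<close>

definition hermitian_mat :: "nat \<Rightarrow> complex mat \<Rightarrow> bool" where
  "hermitian_mat N M \<longleftrightarrow> M \<in> carrier_mat N N \<and> (\<forall>a<N. \<forall>b<N. M $$ (b, a) = cnj (M $$ (a, b)))"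

definition projection_mat :: "nat \<Rightarrow> complex mat \<Rightarrow> bool" where
  "projection_mat N P \<longleftrightarrow> hermitian_mat N P \<and> P * P = P"

definition rank_one_mat :: "complex vec \<Rightarrow> complex mat" where
  "rank_one_mat v = mat (dim_vec v) (dim_vec v) (\<lambda>(a, b). v $ a * cnj (v $ b))"

lemma hermitian_matI:
  "M \<in> carrier_mat N N \<Longrightarrow> (\<And>a b. a < N \<Longrightarrow> b < N \<Longrightarrow> M $$ (b, a) = cnj (M $$ (a, b)))
   \<Longrightarrow> hermitian_mat N M"
  unfolding hermitian_mat_def by blast

lemma hermitian_mat_carrier: "hermitian_mat N M \<Longrightarrow> M \<in> carrier_mat N N"
  by (simp add: hermitian_mat_def)

lemma hermitian_mat_entry:
  "hermitian_mat N M \<Longrightarrow> a < N \<Longrightarrow> b < N \<Longrightarrow> M $$ (b, a) = cnj (M $$ (a, b))"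
  unfolding hermitian_mat_def by blast

lemma index_mult_mat_sum:
  "A \<in> carrier_mat nr n \<Longrightarrow> B \<in> carrier_mat n nc \<Longrightarrow> a < nr \<Longrightarrow> b < nc \<Longrightarrow>
   (A * B) $$ (a, b) = (\<Sum>c<n. A $$ (a, c) * B $$ (c, b))"
  by (simp add: scalar_prod_def atLeast0LessThan)

lemma index_mult_mat_vec_sum:
  "A \<in> carrier_mat nr n \<Longrightarrow> v \<in> carrier_vec n \<Longrightarrow> a < nr \<Longrightarrow>
   (A *\<^sub>v v) $ a = (\<Sum>c<n. A $$ (a, c) * v $ c)"
  by (simp add: scalar_prod_def atLeast0LessThan)

lemma hermitian_mat_one: "hermitian_mat N (1\<^sub>m N)"
  by (rule hermitian_matI) auto

lemma hermitian_mat_minus: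
  assumes A: "hermitian_mat N A" and B: "hermitian_mat N B"
  shows "hermitian_mat N (A - B)"
proof (rule hermitian_matI)
  fix a b assume ab: "a < N" "b < N"
  then show "(A - B) $$ (b, a) = cnj ((A - B) $$ (a, b))"
    using hermitian_mat_carrier[OF A] hermitian_mat_carrier[OF B]
      hermitian_mat_entry[OF A ab] hermitian_mat_entry[OF B ab]
    by simp
qed (use hermitian_mat_carrier[OF B] in \<open>rule minus_carrier_mat\<close>)

lemma hermitian_mat_rank_one: "v \<in> carrier_vec N \<Longrightarrow> hermitian_mat N (rank_one_mat v)"
  by (rule hermitian_matI) (auto simp: rank_one_mat_def)

lemma rank_one_mat_carrier: "v \<in> carrier_vec N \<Longrightarrow> rank_one_mat v \<in> carrier_mat N N"
  by (simp add: rank_one_mat_def)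

lemma projection_mat_complement:
  assumes "projection_mat N P"
  shows "projection_mat N (1\<^sub>m N - P)"
proof -
  have P: "P \<in> carrier_mat N N" and PP: "P * P = P"
    using assms by (simp_all add: projection_mat_def hermitian_mat_carrier)
  have "(1\<^sub>m N - P) * (1\<^sub>m N - P) = (1\<^sub>m N - P) * 1\<^sub>m N - (1\<^sub>m N - P) * P"
    using P by (intro mult_minus_distrib_mat) auto
  also have "(1\<^sub>m N - P) * P = 1\<^sub>m N * P - P * P"
    using P by (intro minus_mult_distrib_mat) auto
  also have "(1\<^sub>m N - P) * 1\<^sub>m N - (1\<^sub>m N * P - P * P) = 1\<^sub>m N - P"
    using P by (intro eq_matI) (auto simp: PP left_mult_one_mat[OF P])
  finally show ?thesis
    using assms hermitian_mat_one hermitian_mat_minus by (auto simp: projection_mat_def)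
qed

lemma projection_mat_half_involution:
  assumes G: "hermitian_mat N G" and GG: "G * G = 1\<^sub>m N"
  shows "projection_mat N ((1/2) \<cdot>\<^sub>m (1\<^sub>m N + G))"
proof -
  have Gc: "G \<in> carrier_mat N N"
    by (rule hermitian_mat_carrier[OF G])
  have "(1\<^sub>m N + G) * (1\<^sub>m N + G) = (1\<^sub>m N + G) * 1\<^sub>m N + (1\<^sub>m N + G) * G"
    using Gc by (intro mult_add_distrib_mat) auto
  also have "(1\<^sub>m N + G) * G = 1\<^sub>m N * G + G * G"
    using Gc by (intro add_mult_distrib_mat) auto
  finally have sq: "(1\<^sub>m N + G) * (1\<^sub>m N + G) = 1\<^sub>m N + G + (G + 1\<^sub>m N)"
    using Gc by (simp add: GG)
  have "(1/2) \<cdot>\<^sub>m (1\<^sub>m N + G) * ((1/2) \<cdot>\<^sub>m (1\<^sub>m N + G))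
      = (1/2) \<cdot>\<^sub>m ((1\<^sub>m N + G) * ((1/2) \<cdot>\<^sub>m (1\<^sub>m N + G)))"
    using Gc by (intro mult_smult_assoc_mat) auto
  also have "(1\<^sub>m N + G) * ((1/2) \<cdot>\<^sub>m (1\<^sub>m N + G)) = (1/2) \<cdot>\<^sub>m ((1\<^sub>m N + G) * (1\<^sub>m N + G))"
    using Gc by (intro mult_smult_distrib) auto
  also have "(1/2) \<cdot>\<^sub>m ((1/2) \<cdot>\<^sub>m ((1\<^sub>m N + G) * (1\<^sub>m N + G))) = (1/2) \<cdot>\<^sub>m (1\<^sub>m N + G)"
    unfolding sq using Gc by (intro eq_matI) auto
  finally have "(1/2) \<cdot>\<^sub>m (1\<^sub>m N + G) * ((1/2) \<cdot>\<^sub>m (1\<^sub>m N + G)) = (1/2) \<cdot>\<^sub>m (1\<^sub>m N + G)" .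
  moreover have "hermitian_mat N ((1/2) \<cdot>\<^sub>m (1\<^sub>m N + G))"
  proof (rule hermitian_matI)
    fix a b assume ab: "a < N" "b < N"
    then show "((1/2) \<cdot>\<^sub>m (1\<^sub>m N + G)) $$ (b, a) = cnj (((1/2) \<cdot>\<^sub>m (1\<^sub>m N + G)) $$ (a, b))"
      using Gc hermitian_mat_entry[OF G ab] by auto
  qed (use Gc in simp)
  ultimately show ?thesis
    by (simp add: projection_mat_def)
qed

lemma mult_rank_one_mat_fixed:
  assumes P: "P \<in> carrier_mat N N" and v: "v \<in> carrier_vec N" and Pv: "P *\<^sub>v v = v"
  shows "P * rank_one_mat v = rank_one_mat v"
proof (rule eq_matI)
  fix a b assume "a < dim_row (rank_one_mat v)" "b < dim_col (rank_one_mat v)"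
  then have ab: "a < N" "b < N"
    using v by (auto simp: rank_one_mat_def)
  have "(P * rank_one_mat v) $$ (a, b) = (\<Sum>c<N. P $$ (a, c) * v $ c) * cnj (v $ b)"
    unfolding index_mult_mat_sum[OF P rank_one_mat_carrier[OF v] ab]
    using v ab by (simp add: rank_one_mat_def sum_distrib_right mult.assoc)
  also have "(\<Sum>c<N. P $$ (a, c) * v $ c) = v $ a"
    using index_mult_mat_vec_sum[OF P v ab(1)] Pv by simp
  finally show "(P * rank_one_mat v) $$ (a, b) = rank_one_mat v $$ (a, b)"
    using v ab by (simp add: rank_one_mat_def)
qed (use P v in \<open>auto simp: rank_one_mat_def\<close>)

lemma rank_one_mat_mult_fixed:
  assumes P: "hermitian_mat N P" and v: "v \<in> carrier_vec N" and Pv: "P *\<^sub>v v = v"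
  shows "rank_one_mat v * P = rank_one_mat v"
proof (rule eq_matI)
  fix a b assume "a < dim_row (rank_one_mat v)" "b < dim_col (rank_one_mat v)"
  then have ab: "a < N" "b < N"
    using v by (auto simp: rank_one_mat_def)
  have Pc: "P \<in> carrier_mat N N"
    by (rule hermitian_mat_carrier[OF P])
  have "(rank_one_mat v * P) $$ (a, b) = (\<Sum>c<N. v $ a * cnj (v $ c) * P $$ (c, b))"
    unfolding index_mult_mat_sum[OF rank_one_mat_carrier[OF v] Pc ab]
    using v ab by (simp add: rank_one_mat_def)
  also have "\<dots> = v $ a * cnj (\<Sum>c<N. P $$ (b, c) * v $ c)"
    by (simp add: sum_distrib_left hermitian_mat_entry[OF P, symmetric] ab mult_ac)
  also have "(\<Sum>c<N. P $$ (b, c) * v $ c) = v $ b"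
    using index_mult_mat_vec_sum[OF Pc v ab(2)] Pv by simp
  finally show "(rank_one_mat v * P) $$ (a, b) = rank_one_mat v $$ (a, b)"
    using v ab by (simp add: rank_one_mat_def)
qed (use hermitian_mat_carrier[OF P] v in \<open>auto simp: rank_one_mat_def\<close>)

lemma rank_one_mat_idem:
  assumes v: "v \<in> carrier_vec N" and unit: "v \<bullet>c v = 1"
  shows "rank_one_mat v * rank_one_mat v = rank_one_mat v"
proof (rule eq_matI)
  fix a b assume "a < dim_row (rank_one_mat v)" "b < dim_col (rank_one_mat v)"
  then have ab: "a < N" "b < N"
    using v by (auto simp: rank_one_mat_def)
  have "(rank_one_mat v * rank_one_mat v) $$ (a, b) = v $ a * cnj (v $ b) * (\<Sum>c<N. v $ c * cnj (v $ c))"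
    unfolding index_mult_mat_sum[OF rank_one_mat_carrier[OF v] rank_one_mat_carrier[OF v] ab]
    using v ab by (simp add: rank_one_mat_def sum_distrib_left mult_ac)
  also have "(\<Sum>c<N. v $ c * cnj (v $ c)) = 1"
    using v unit by (simp add: scalar_prod_def atLeast0LessThan)
  finally show "(rank_one_mat v * rank_one_mat v) $$ (a, b) = rank_one_mat v $$ (a, b)"
    using v ab by (simp add: rank_one_mat_def)
qed (use v in \<open>auto simp: rank_one_mat_def\<close>)

lemma projection_mat_minus_rank_one:
  assumes P: "projection_mat N P" and v: "v \<in> carrier_vec N" and unit: "v \<bullet>c v = 1"
    and Pv: "P *\<^sub>v v = v"
  shows "projection_mat N (P - rank_one_mat v)"
proof -
  have hP: "hermitian_mat N P" and PP: "P * P = P"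
    using P by (simp_all add: projection_mat_def)
  have Pc: "P \<in> carrier_mat N N" and R: "rank_one_mat v \<in> carrier_mat N N"
    using hermitian_mat_carrier[OF hP] rank_one_mat_carrier[OF v] .
  have "(P - rank_one_mat v) * (P - rank_one_mat v)
      = P * (P - rank_one_mat v) - rank_one_mat v * (P - rank_one_mat v)"
    using Pc R by (intro minus_mult_distrib_mat) auto
  also have "P * (P - rank_one_mat v) = P * P - P * rank_one_mat v"
    using Pc R by (intro mult_minus_distrib_mat) auto
  also have "rank_one_mat v * (P - rank_one_mat v) = rank_one_mat v * P - rank_one_mat v * rank_one_mat v"
    using Pc R by (intro mult_minus_distrib_mat) auto
  also have "P * P - P * rank_one_mat v - (rank_one_mat v * P - rank_one_mat v * rank_one_mat v)
      = P - rank_one_mat v"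
    unfolding PP mult_rank_one_mat_fixed[OF Pc v Pv] rank_one_mat_mult_fixed[OF hP v Pv]
      rank_one_mat_idem[OF v unit]
    using Pc R by (intro eq_matI) auto
  finally show ?thesis
    using hP hermitian_mat_rank_one[OF v] hermitian_mat_minus by (simp add: projection_mat_def)
qed

lemma mtrace_mult_hermitian:
  assumes B: "B \<in> carrier_mat N N" and Q: "hermitian_mat N Q"
  shows "mtrace (B * Q) = (\<Sum>c<N. col B c \<bullet>c col Q c)"
proof -
  have Qc: "Q \<in> carrier_mat N N"
    by (rule hermitian_mat_carrier[OF Q])
  have "mtrace (B * Q) = (\<Sum>k<N. (B * Q) $$ (k, k))"
    using B Qc by (simp add: mtrace_def)
  also have "\<dots> = (\<Sum>k<N. \<Sum>c<N. B $$ (k, c) * Q $$ (c, k))"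
    by (intro sum.cong refl index_mult_mat_sum[OF B Qc]) auto
  also have "\<dots> = (\<Sum>c<N. \<Sum>k<N. B $$ (k, c) * cnj (Q $$ (k, c)))"
    by (subst sum.swap) (simp add: hermitian_mat_entry[OF Q, symmetric])
  also have "\<dots> = (\<Sum>c<N. col B c \<bullet>c col Q c)"
    using B Qc by (simp add: scalar_prod_def atLeast0LessThan)
  finally show ?thesis .
qed

lemma mtrace_mult_projection_nonneg:
  assumes \<rho>: "\<rho> \<in> carrier_mat N N" and psd: "\<forall>v \<in> carrier_vec N. 0 \<le> (\<rho> *\<^sub>v v) \<bullet>c v"
    and Q: "projection_mat N Q"
  shows "0 \<le> mtrace (\<rho> * Q)"
proof -
  have hQ: "hermitian_mat N Q" and QQ: "Q * Q = Q"
    using Q by (simp_all add: projection_mat_def)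
  have Qc: "Q \<in> carrier_mat N N"
    by (rule hermitian_mat_carrier[OF hQ])
  have "mtrace (\<rho> * Q) = mtrace ((\<rho> * Q) * Q)"
    using \<rho> Qc by (simp add: QQ)
  also have "\<dots> = (\<Sum>c<N. col (\<rho> * Q) c \<bullet>c col Q c)"
    using \<rho> Qc by (intro mtrace_mult_hermitian[OF _ hQ]) simp
  also have "\<dots> = (\<Sum>c<N. (\<rho> *\<^sub>v col Q c) \<bullet>c col Q c)"
    using \<rho> Qc by (intro sum.cong refl) simp
  also have "0 \<le> \<dots>"
    using psd Qc by (intro sum_nonneg) simp
  finally show ?thesis .
qed

lemma mtrace_minus:
  "A \<in> carrier_mat N N \<Longrightarrow> B \<in> carrier_mat N N \<Longrightarrow> mtrace (A - B) = mtrace A - mtrace B"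
  by (simp add: mtrace_def sum_subtractf)

lemma mtrace_mult_minus:
  assumes A: "A \<in> carrier_mat N N" and B: "B \<in> carrier_mat N N" and C: "C \<in> carrier_mat N N"
  shows "mtrace (A * (B - C)) = mtrace (A * B) - mtrace (A * C)"
proof -
  have "A * (B - C) = A * B - A * C"
    using A B C by (rule mult_minus_distrib_mat)
  then show ?thesis
    using A B C by (simp add: mtrace_minus[of _ N])
qed

lemma mtrace_mult_rank_one:
  assumes \<rho>: "\<rho> \<in> carrier_mat N N" and v: "v \<in> carrier_vec N"
  shows "mtrace (\<rho> * rank_one_mat v) = (\<rho> *\<^sub>v v) \<bullet>c v"
proof -
  have "mtrace (\<rho> * rank_one_mat v) = (\<Sum>k<N. (\<rho> * rank_one_mat v) $$ (k, k))"
    using \<rho> v by (simp add: mtrace_def)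
  also have "\<dots> = (\<Sum>k<N. \<Sum>c<N. \<rho> $$ (k, c) * rank_one_mat v $$ (c, k))"
    by (intro sum.cong refl index_mult_mat_sum[OF \<rho> rank_one_mat_carrier[OF v]]) auto
  also have "\<dots> = (\<Sum>k<N. (\<Sum>c<N. \<rho> $$ (k, c) * v $ c) * cnj (v $ k))"
    using v by (simp add: rank_one_mat_def sum_distrib_right mult.assoc)
  also have "\<dots> = (\<rho> *\<^sub>v v) \<bullet>c v"
    using \<rho> v by (simp add: scalar_prod_def atLeast0LessThan)
  finally show ?thesis .
qed

lemma fidelity_le_mtrace_projection:
  assumes \<rho>: "\<rho> \<in> carrier_mat N N" and psd: "\<forall>w \<in> carrier_vec N. 0 \<le> (\<rho> *\<^sub>v w) \<bullet>c w"
    and P: "projection_mat N P" and v: "v \<in> carrier_vec N" and unit: "v \<bullet>c v = 1"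
    and Pv: "P *\<^sub>v v = v"
  shows "fidelity \<rho> v \<le> Re (mtrace (\<rho> * P))"
proof -
  have Pc: "P \<in> carrier_mat N N"
    using P by (simp add: projection_mat_def hermitian_mat_carrier)
  have "0 \<le> mtrace (\<rho> * (P - rank_one_mat v))"
    using \<rho> psd projection_mat_minus_rank_one[OF P v unit Pv] by (rule mtrace_mult_projection_nonneg)
  also have "\<dots> = mtrace (\<rho> * P) - (\<rho> *\<^sub>v v) \<bullet>c v"
    using \<rho> Pc v by (simp add: mtrace_mult_minus rank_one_mat_carrier mtrace_mult_rank_one)
  finally show ?thesis
    by (simp add: fidelity_def less_eq_complex_def)
qed

lemma mtrace_projection_le_one:
  assumes \<rho>: "\<rho> \<in> carrier_mat N N" and psd: "\<forall>w \<in> carrier_vec N. 0 \<le> (\<rho> *\<^sub>v w) \<bullet>c w"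
    and tr: "mtrace \<rho> = 1" and P: "projection_mat N P"
  shows "Re (mtrace (\<rho> * P)) \<le> 1"
proof -
  have Pc: "P \<in> carrier_mat N N"
    using P by (simp add: projection_mat_def hermitian_mat_carrier)
  have "0 \<le> mtrace (\<rho> * (1\<^sub>m N - P))"
    using \<rho> psd projection_mat_complement[OF P] by (rule mtrace_mult_projection_nonneg)
  also have "\<dots> = 1 - mtrace (\<rho> * P)"
    using \<rho> Pc tr by (simp add: mtrace_mult_minus)
  finally show ?thesis
    by (simp add: less_eq_complex_def)
qed

section \<open>Pauli operators and the stabilizer group\<close>

lemma sum_prod_bits:
  fixes f :: "nat \<Rightarrow> bool \<Rightarrow> 'a::comm_semiring_1"
  shows "(\<Sum>s<(2::nat)^n. \<Prod>k<n. f k (odd (s div 2^k))) = (\<Prod>k<n. f k False + f k True)"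
proof (induction n)
  case 0
  then show ?case by simp
next
  case (Suc n)
  let ?S = "\<lambda>h. \<Sum>s<(2::nat)^n. \<Prod>k<Suc n. f k (odd ((s + h) div 2^k))"
  have split: "{..<(2::nat)^Suc n} = {..<2^n} \<union> (\<lambda>s. s + 2^n) ` {..<2^n}"
  proof -
    have "{(2::nat)^n..<2^n+2^n} = (\<lambda>s. s + 2^n) ` {..<2^n}"
    proof (intro equalityI subsetI)
      fix x :: nat assume "x \<in> {2^n..<2^n+2^n}"
      then show "x \<in> (\<lambda>s. s + 2^n) ` {..<2^n}"
        by (intro image_eqI[where x = "x - 2^n"]) auto
    qed auto
    moreover have "{..<(2::nat)^Suc n} = {..<2^n} \<union> {2^n..<2^n+2^n}"
      by auto
    ultimately show ?thesis by simp
  qed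
  have high_bit: "odd ((s + 2^n) div 2^n) \<and> \<not> odd (s div 2^n)" if "s < 2^n" for s :: nat
    using that by simp
  have low_bits: "odd ((s + 2^n) div 2^k) = odd (s div 2^k)" if "k < n" for s k :: nat
  proof -
    have "(2::nat)^n = 2^k * 2^(n-k)"
      using that by (simp add: power_add[symmetric])
    then have "(s + 2^n) div 2^k = s div 2^k + 2^(n-k)"
      by simp
    then show ?thesis
      using that by simp
  qed
  have "(\<Sum>s<(2::nat)^Suc n. \<Prod>k<Suc n. f k (odd (s div 2^k))) = ?S 0 + ?S (2^n)"
    unfolding split by (subst sum.union_disjoint) (auto simp: sum.reindex inj_on_def)
  also have "?S 0 = (\<Sum>s<(2::nat)^n. \<Prod>k<n. f k (odd (s div 2^k))) * f n False"
    by (simp add: sum_distrib_right high_bit)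
  also have "?S (2^n) = (\<Sum>s<(2::nat)^n. \<Prod>k<n. f k (odd (s div 2^k))) * f n True"
    by (simp add: sum_distrib_right high_bit low_bits del: power_Suc)
  finally show ?case
    by (simp add: Suc.IH distrib_left)
qed

lemma nat_eq_if_bits_eq:
  fixes r c :: nat
  assumes "r < 2^n" "c < 2^n" "\<forall>k<n. odd (r div 2^k) = odd (c div 2^k)"
  shows "r = c"
proof -
  have "bit r k = bit c k" for k
  proof (cases "k < n")
    case True
    then show ?thesis using assms(3) by (simp add: bit_iff_odd)
  next
    case False
    then have "(2::nat)^n \<le> 2^k" by simp
    then have "r div 2^k = 0" "c div 2^k = 0"
      using assms(1,2) by (meson div_less less_le_trans)+
    then show ?thesis by (simp add: bit_iff_odd)
  qed
  then show ?thesis by (simp add: bit_eq_iff)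
qed

lemma prod_of_bool_bits_eq:
  fixes r c :: nat
  assumes "r < 2^n" "c < 2^n"
  shows "(\<Prod>k<n. (of_bool (odd (r div 2^k) = odd (c div 2^k)) :: 'a::comm_semiring_1)) = of_bool (r = c)"
proof (cases "r = c")
  case False
  then obtain k where "k < n" "odd (r div 2^k) \<noteq> odd (c div 2^k)"
    using nat_eq_if_bits_eq[OF assms] by blast
  then have "(\<Prod>k<n. (of_bool (odd (r div 2^k) = odd (c div 2^k)) :: 'a)) = 0"
    by (intro prod_zero) (auto intro!: bexI[where x = k])
  then show ?thesis
    using False by simp
qed simp

lemma pauli1_entry_square:
  "pauli1_entry p r False * pauli1_entry p False c + pauli1_entry p r True * pauli1_entry p True c
   = of_bool (r = c)"
  by (cases p; cases r; cases c) auto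

lemma pauli1_entry_cnj: "pauli1_entry p c r = cnj (pauli1_entry p r c)"
  by (cases p; cases r; cases c) auto

lemma pauli_mat_carrier: "pauli_mat n ph P \<in> carrier_mat (2^n) (2^n)"
  by (simp add: pauli_mat_def)

lemma index_pauli_mat:
  "r < 2^n \<Longrightarrow> c < 2^n \<Longrightarrow>
   pauli_mat n ph P $$ (r, c) = ph * (\<Prod>k<n. pauli1_entry (P k) (odd (r div 2^k)) (odd (c div 2^k)))"
  by (simp add: pauli_mat_def)

lemma pauli_mat_smult: "pauli_mat n ph P = ph \<cdot>\<^sub>m pauli_mat n 1 P"
  by (rule eq_matI) (auto simp: pauli_mat_def)

lemma pauli_mat_one_square: "pauli_mat n 1 P * pauli_mat n 1 P = 1\<^sub>m (2^n)"
proof (rule eq_matI)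
  fix r c assume "r < dim_row (1\<^sub>m (2^n) :: complex mat)" "c < dim_col (1\<^sub>m (2^n) :: complex mat)"
  then have r: "r < 2^n" and c: "c < 2^n" by auto
  have "(pauli_mat n 1 P * pauli_mat n 1 P) $$ (r, c)
      = (\<Sum>s<(2::nat)^n. \<Prod>k<n. pauli1_entry (P k) (odd (r div 2^k)) (odd (s div 2^k))
                                * pauli1_entry (P k) (odd (s div 2^k)) (odd (c div 2^k)))"
    unfolding index_mult_mat_sum[OF pauli_mat_carrier pauli_mat_carrier r c]
    by (intro sum.cong refl) (simp add: index_pauli_mat r c prod.distrib)
  also have "\<dots> = (\<Prod>k<n.
        pauli1_entry (P k) (odd (r div 2^k)) False * pauli1_entry (P k) False (odd (c div 2^k))
      + pauli1_entry (P k) (odd (r div 2^k)) True * pauli1_entry (P k) True (odd (c div 2^k)))"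
    by (rule sum_prod_bits)
  also have "\<dots> = (\<Prod>k<n. of_bool (odd (r div 2^k) = odd (c div 2^k)))"
    by (simp only: pauli1_entry_square)
  also have "\<dots> = of_bool (r = c)"
    by (rule prod_of_bool_bits_eq[OF r c])
  finally show "(pauli_mat n 1 P * pauli_mat n 1 P) $$ (r, c) = 1\<^sub>m (2^n) $$ (r, c)"
    using r c by simp
qed (auto simp: pauli_mat_def)

lemma pauli_mat_square: "pauli_mat n ph P * pauli_mat n ph P = (ph * ph) \<cdot>\<^sub>m 1\<^sub>m (2^n)"
proof -
  let ?T = "pauli_mat n 1 P"
  have T: "?T \<in> carrier_mat (2^n) (2^n)"
    by (rule pauli_mat_carrier)
  have "pauli_mat n ph P * pauli_mat n ph P = ph \<cdot>\<^sub>m ?T * (ph \<cdot>\<^sub>m ?T)"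
    by (subst (1 2) pauli_mat_smult) (rule refl)
  also have "\<dots> = ph \<cdot>\<^sub>m (?T * (ph \<cdot>\<^sub>m ?T))"
    using T by (intro mult_smult_assoc_mat) auto
  also have "?T * (ph \<cdot>\<^sub>m ?T) = ph \<cdot>\<^sub>m (?T * ?T)"
    using T by (intro mult_smult_distrib) auto
  also have "ph \<cdot>\<^sub>m (ph \<cdot>\<^sub>m (?T * ?T)) = (ph * ph) \<cdot>\<^sub>m 1\<^sub>m (2^n)"
    unfolding pauli_mat_one_square by (rule eq_matI) auto
  finally show ?thesis .
qed

lemma hermitian_pauli_mat_one: "hermitian_mat (2^n) (pauli_mat n 1 P)"
proof (rule hermitian_matI[OF pauli_mat_carrier])
  fix r c :: nat assume "r < 2^n" "c < 2^n"
  then show "pauli_mat n 1 P $$ (c, r) = cnj (pauli_mat n 1 P $$ (r, c))"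
    by (simp only: index_pauli_mat mult_1 cnj_prod) (intro prod.cong refl pauli1_entry_cnj)
qed

definition hermitian_involution :: "nat \<Rightarrow> complex mat \<Rightarrow> bool" where
  "hermitian_involution N G \<longleftrightarrow> hermitian_mat N G \<and> G * G = 1\<^sub>m N"

lemma hermitian_involution_carrier: "hermitian_involution N G \<Longrightarrow> G \<in> carrier_mat N N"
  by (simp add: hermitian_involution_def hermitian_mat_carrier)

lemma hermitian_involution_one: "hermitian_involution N (1\<^sub>m N)"
  by (simp add: hermitian_involution_def hermitian_mat_one)

lemma hermitian_involution_mult:
  assumes A: "hermitian_involution N A" and B: "hermitian_involution N B" and AB: "A * B = B * A"
  shows "hermitian_involution N (A * B)"
proof -
  have hA: "hermitian_mat N A" and AA: "A * A = 1\<^sub>m N"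
    and hB: "hermitian_mat N B" and BB: "B * B = 1\<^sub>m N"
    using A B by (simp_all add: hermitian_involution_def)
  have Ac: "A \<in> carrier_mat N N" and Bc: "B \<in> carrier_mat N N"
    using hermitian_mat_carrier[OF hA] hermitian_mat_carrier[OF hB] .
  have "hermitian_mat N (A * B)"
  proof (rule hermitian_matI)
    fix a b assume ab: "a < N" "b < N"
    have "(A * B) $$ (b, a) = (\<Sum>c<N. cnj (B $$ (a, c) * A $$ (c, b)))"
      unfolding index_mult_mat_sum[OF Ac Bc ab(2,1)]
      by (intro sum.cong refl) (simp add: hermitian_mat_entry[OF hA, symmetric]
          hermitian_mat_entry[OF hB, symmetric] ab)
    also have "\<dots> = cnj ((B * A) $$ (a, b))"
      by (simp add: index_mult_mat_sum[OF Bc Ac ab])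
    finally show "(A * B) $$ (b, a) = cnj ((A * B) $$ (a, b))"
      by (simp add: AB)
  qed (use Ac Bc in simp)
  moreover have "A * B * (A * B) = 1\<^sub>m N"
  proof -
    have "A * B * (A * B) = A * (B * A) * B"
      using Ac Bc by (simp add: assoc_mult_mat[of _ N N _ N _ N])
    also have "\<dots> = (A * A) * (B * B)"
      using Ac Bc by (simp add: AB[symmetric] assoc_mult_mat[of _ N N _ N _ N])
    finally show ?thesis
      using AA BB by simp
  qed
  ultimately show ?thesis
    by (simp add: hermitian_involution_def)
qed

lemma hermitian_involution_pauli_fixing:
  assumes G: "is_pauli n G" and v: "v \<in> carrier_vec (2^n)" "v \<noteq> 0\<^sub>v (2^n)" and Gv: "G *\<^sub>v v = v"
  shows "hermitian_involution (2^n) G"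
proof -
  obtain ph P where ph: "ph \<in> {1, -1, \<i>, -\<i>}" and G_eq: "G = ph \<cdot>\<^sub>m pauli_mat n 1 P"
    using G pauli_mat_smult unfolding is_pauli_def by metis
  have GG: "G * G = (ph * ph) \<cdot>\<^sub>m 1\<^sub>m (2^n)"
    unfolding G_eq pauli_mat_smult[symmetric] by (rule pauli_mat_square)
  have Gc: "G \<in> carrier_mat (2^n) (2^n)"
    unfolding G_eq by (simp add: pauli_mat_carrier)
  have "(ph * ph) \<cdot>\<^sub>v v = (ph * ph) \<cdot>\<^sub>v (1\<^sub>m (2^n) *\<^sub>v v)"
    using v by auto
  also have "\<dots> = (G * G) *\<^sub>v v"
    unfolding GG using v by auto
  also have "\<dots> = v"
    using Gc v Gv by simp
  finally have "(ph * ph) \<cdot>\<^sub>v v = v" .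
  moreover obtain i where "i < 2^n" "v $ i \<noteq> 0"
    using v by (metis eq_vecI carrier_vecD index_zero_vec)
  ultimately have "ph * ph = 1"
    by (metis index_smult_vec(1) carrier_vecD[OF v(1)] mult_cancel_right2)
  then have ph_real: "ph = 1 \<or> ph = -1"
    using ph by auto
  have "hermitian_mat (2^n) G"
  proof (rule hermitian_matI)
    fix a b :: nat assume ab: "a < 2^n" "b < 2^n"
    then show "G $$ (b, a) = cnj (G $$ (a, b))"
      unfolding G_eq using ph_real hermitian_mat_entry[OF hermitian_pauli_mat_one ab]
        pauli_mat_carrier[of n 1 P] by auto
  qed (rule Gc)
  moreover have "G * G = 1\<^sub>m (2^n)"
    unfolding GG \<open>ph * ph = 1\<close> by (rule eq_matI) auto
  ultimately show ?thesis
    by (simp add: hermitian_involution_def)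
qed

lemma gen_prod_carrier:
  assumes "\<forall>k<n. g k \<in> carrier_mat N N" and "j \<le> n"
  shows "gen_prod N g u j \<in> carrier_mat N N"
  using assms(2) by (induction j) (use assms(1) in auto)

lemma gen_prod_commute:
  assumes g: "\<forall>k<n. g k \<in> carrier_mat N N" and comm: "\<forall>k<n. \<forall>l<n. g k * g l = g l * g k"
    and j: "j \<le> n" and k: "k < n"
  shows "gen_prod N g u j * g k = g k * gen_prod N g u j"
  using j
proof (induction j)
  case 0
  have "g k \<in> carrier_mat N N"
    using g k by simp
  then show ?case
    by (simp add: left_mult_one_mat right_mult_one_mat)
next
  case (Suc j)
  let ?X = "gen_prod N g u j" and ?H = "if u $ j = 1 then g j else 1\<^sub>m N"
  have X: "?X \<in> carrier_mat N N"
    using gen_prod_carrier[OF g] Suc.prems by simp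
  have H: "?H \<in> carrier_mat N N" and gk: "g k \<in> carrier_mat N N"
    using g k Suc.prems by auto
  have Hk: "?H * g k = g k * ?H"
    using comm g k Suc.prems by auto
  have "?X * ?H * g k = ?X * (g k * ?H)"
    using X H gk by (simp add: Hk)
  also have "\<dots> = (?X * g k) * ?H"
    using X H gk by simp
  also have "\<dots> = g k * (?X * ?H)"
    using X H gk Suc by simp
  finally show ?case
    by simp
qed

lemma gen_prod_hermitian_involution_fixing:
  assumes herm: "\<forall>k<n. hermitian_involution N (g k)" and comm: "\<forall>k<n. \<forall>l<n. g k * g l = g l * g k"
    and fixed: "\<forall>k<n. g k *\<^sub>v v = v" and v: "v \<in> carrier_vec N" and j: "j \<le> n"
  shows "hermitian_involution N (gen_prod N g u j) \<and> gen_prod N g u j *\<^sub>v v = v"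
  using j
proof (induction j)
  case 0
  then show ?case using v by (simp add: hermitian_involution_one)
next
  case (Suc j)
  let ?X = "gen_prod N g u j" and ?H = "if u $ j = 1 then g j else 1\<^sub>m N"
  have g: "\<forall>k<n. g k \<in> carrier_mat N N"
    using herm hermitian_involution_carrier by blast
  have X: "hermitian_involution N ?X" "?X *\<^sub>v v = v"
    using Suc by simp_all
  have H: "hermitian_involution N ?H" "?H *\<^sub>v v = v"
    using herm fixed v Suc.prems by (auto simp: hermitian_involution_one)
  have XH: "?X * ?H = ?H * ?X"
  proof (cases "u $ j = 1")
    case True
    then show ?thesis
      using gen_prod_commute[OF g comm, of j] Suc.prems by simp
  next
    case False
    have "?X \<in> carrier_mat N N"
      using gen_prod_carrier[OF g] Suc.prems by simp
    then show ?thesis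
      using False by (simp add: left_mult_one_mat right_mult_one_mat)
  qed
  have "hermitian_involution N (?X * ?H)"
    using X(1) H(1) XH by (rule hermitian_involution_mult)
  moreover have "(?X * ?H) *\<^sub>v v = v"
    using X H v hermitian_involution_carrier[OF X(1)] hermitian_involution_carrier[OF H(1)] by simp
  ultimately show ?case
    by simp
qed

lemma stabilizer_state_g_of:
  assumes "stabilizer_state n g \<psi>"
  shows "hermitian_involution (2^n) (g_of n g u) \<and> g_of n g u *\<^sub>v \<psi> = \<psi>"
proof -
  have \<psi>: "\<psi> \<in> carrier_vec (2^n)" and unit: "\<psi> \<bullet>c \<psi> = 1"
    and pauli: "\<forall>k<n. is_pauli n (g k)" and comm: "\<forall>k<n. \<forall>l<n. g k * g l = g l * g k"
    and fixed: "\<forall>k<n. g k *\<^sub>v \<psi> = \<psi>"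
    using assms by (simp_all add: stabilizer_state_def)
  have "\<psi> \<noteq> 0\<^sub>v (2^n)"
    using unit by auto
  then have "\<forall>k<n. hermitian_involution (2^n) (g k)"
    using pauli fixed \<psi> hermitian_involution_pauli_fixing by blast
  then show ?thesis
    unfolding g_of_def using comm fixed \<psi> by (intro gen_prod_hermitian_involution_fixing) auto
qed

lemma half_involution_fixing:
  assumes G: "hermitian_involution N G" and v: "v \<in> carrier_vec N" and Gv: "G *\<^sub>v v = v"
  shows "((1/2) \<cdot>\<^sub>m (1\<^sub>m N + G)) *\<^sub>v v = v"
proof -
  have Gc: "G \<in> carrier_mat N N"
    by (rule hermitian_involution_carrier[OF G])
  have "((1/2) \<cdot>\<^sub>m (1\<^sub>m N + G)) *\<^sub>v v = (1/2) \<cdot>\<^sub>v ((1\<^sub>m N + G) *\<^sub>v v)"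
    using Gc v by (intro eq_vecI) auto
  also have "(1\<^sub>m N + G) *\<^sub>v v = v + v"
    using Gc v Gv by (simp add: add_mult_distrib_mat_vec[of _ N N])
  finally show ?thesis
    using v by (intro eq_vecI) auto
qed

lemma fidelity_nonneg:
  assumes "density_matrix n \<rho>" and "\<psi> \<in> carrier_vec (2^n)"
  shows "0 \<le> fidelity \<rho> \<psi>"
  using assms by (simp add: density_matrix_def fidelity_def less_eq_complex_def)

lemma fidelity_le_plus_prob:
  assumes \<rho>: "density_matrix n \<rho>" and \<psi>: "\<psi> \<in> carrier_vec (2^n)" "\<psi> \<bullet>c \<psi> = 1"
    and G: "hermitian_involution (2^n) G" "G *\<^sub>v \<psi> = \<psi>"
  shows "fidelity \<rho> \<psi> \<le> plus_prob n \<rho> G"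
  unfolding plus_prob_def
  using \<rho> G \<psi> projection_mat_half_involution half_involution_fixing
  by (intro fidelity_le_mtrace_projection) (auto simp: density_matrix_def hermitian_involution_def)

lemma plus_prob_le_one:
  assumes "density_matrix n \<rho>" and "hermitian_involution (2^n) G"
  shows "plus_prob n \<rho> G \<le> 1"
  unfolding plus_prob_def
  using assms projection_mat_half_involution
  by (intro mtrace_projection_le_one) (auto simp: density_matrix_def hermitian_involution_def)

section \<open>Sampling the stabilizer group elements\<close>

lemma finite_sample_index: "finite {(i, j). i < (n::nat) \<and> j < (m i :: nat)}"
proof -
  have "{(i, j). i < n \<and> j < m i} = (SIGMA i:{..<n}. {..<m i})"
    by auto
  then show ?thesis
    by (simp only:) (intro finite_SigmaI finite_lessThan)
qed

lemma map_Pi_pmf_bernoulli_count: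
  assumes S: "finite S" and AS: "A \<subseteq> S" and p: "p \<in> {0..1}"
    and P: "\<And>x. x \<in> A \<Longrightarrow> P x = bernoulli_pmf p"
  shows "map_pmf (\<lambda>Y. card {x \<in> A. Y x}) (Pi_pmf S False P) = binomial_pmf (card A) p"
proof -
  have "binomial_pmf (card A) p = map_pmf (\<lambda>Y. card {x \<in> A. Y x}) (Pi_pmf A False (\<lambda>_. bernoulli_pmf p))"
    using finite_subset[OF AS S] p by (rule binomial_pmf_altdef'[OF _ refl])
  also have "Pi_pmf A False (\<lambda>_. bernoulli_pmf p) = Pi_pmf A False P"
    by (intro Pi_pmf_cong) (simp_all add: P)
  also have "\<dots> = map_pmf (\<lambda>Y x. if x \<in> A then Y x else False) (Pi_pmf S False P)"
    by (rule Pi_pmf_subset[OF S AS])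
  also have "map_pmf (\<lambda>Y. card {x \<in> A. Y x}) \<dots> = map_pmf (\<lambda>Y. card {x \<in> A. Y x}) (Pi_pmf S False P)"
    unfolding map_pmf_comp by (intro map_pmf_cong refl arg_cong[where f = card]) auto
  finally show ?thesis
    by (rule sym)
qed

lemma Pi_pmf_bernoulli_mean_lower_tail:
  assumes S: "finite S" and AS: "A \<subseteq> S" and A: "A \<noteq> {}" and p: "p \<in> {0..1}"
    and P: "\<And>x. x \<in> A \<Longrightarrow> P x = bernoulli_pmf p" and \<epsilon>: "\<epsilon> \<ge> 0"
  shows "measure_pmf.prob (Pi_pmf S False P)
      {Y. real (card {x \<in> A. Y x}) / real (card A) \<le> p - \<epsilon>} \<le> exp (-2 * real (card A) * \<epsilon>^2)"
proof -
  have "card A > 0"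
    using A finite_subset[OF AS S] by (simp add: card_gt_0_iff)
  then have "measure_pmf.prob (binomial_pmf (card A) p) {k. real k / real (card A) \<le> p - \<epsilon>}
      \<le> exp (-2 * real (card A) * \<epsilon>^2)"
    using binomial_distribution.prob_le'[of p "card A" \<epsilon>] p \<epsilon>
    by (simp add: binomial_distribution_def)
  then show ?thesis
    by (simp flip: map_Pi_pmf_bernoulli_count[OF S AS p P])
qed

lemma a_hat_eq_card_row:
  "a_hat m Y i = real (card {x \<in> Pair i ` {..<m i}. Y x}) / real (card (Pair i ` {..<m i}))"
proof -
  have "{x \<in> Pair i ` {..<m i}. Y x} = Pair i ` {j \<in> {..<m i}. Y (i, j)}"
    by auto
  then have "card {x \<in> Pair i ` {..<m i}. Y x} = card {j \<in> {..<m i}. Y (i, j)}"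
    by (simp add: card_image inj_on_def)
  moreover have "(\<Sum>j<m i. of_bool (Y (i, j)) :: real) = real (card {j \<in> {..<m i}. Y (i, j)})"
    by (simp add: Int_def conj_commute)
  moreover have "card (Pair i ` {..<m i}) = m i"
    by (simp add: card_image inj_on_def)
  ultimately show ?thesis
    by (simp add: a_hat_def)
qed

lemma Pi_pmf_a_hat_lower_tail:
  fixes p :: "nat \<Rightarrow> real"
  assumes i: "i < n" and m: "0 < m i" and p: "p i \<in> {0..1}" and \<epsilon>: "\<epsilon> \<ge> 0"
  shows "measure_pmf.prob (Pi_pmf {(i, j). i < n \<and> j < m i} False (\<lambda>(i, j). bernoulli_pmf (p i)))
      {Y. a_hat m Y i \<le> p i - \<epsilon>} \<le> exp (-2 * real (m i) * \<epsilon>^2)"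
proof -
  have row: "card (Pair i ` {..<m i}) = m i"
    by (simp add: card_image inj_on_def)
  have "measure_pmf.prob (Pi_pmf {(i, j). i < n \<and> j < m i} False (\<lambda>(i, j). bernoulli_pmf (p i)))
      {Y. real (card {x \<in> Pair i ` {..<m i}. Y x}) / real (card (Pair i ` {..<m i})) \<le> p i - \<epsilon>}
    \<le> exp (-2 * real (card (Pair i ` {..<m i})) * \<epsilon>^2)"
    using i m by (intro Pi_pmf_bernoulli_mean_lower_tail[OF finite_sample_index _ _ p _ \<epsilon>]) auto
  then show ?thesis
    by (simp only: a_hat_eq_card_row row)
qed

lemma le_U_hat:
  assumes "n \<ge> 1" and "\<And>i. i < n \<Longrightarrow> x \<le> a_hat m Y i"
  shows "x \<le> U_hat n m Y"
proof -
  have "a_hat m Y ` {..<n} \<noteq> {}"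
    using assms(1) by (simp add: lessThan_empty_iff)
  then show ?thesis
    unfolding U_hat_def using assms(2) by (subst Min_ge_iff) auto
qed

lemma prob_fidelity_le_U_hat:
  assumes n: "n \<ge> 1" and st: "stabilizer_state n g \<psi>" and \<rho>: "density_matrix n \<rho>"
    and \<epsilon>: "\<epsilon> \<ge> 0" and m: "\<forall>i<n. 0 < m i"
  shows "measure_pmf.prob (outcomes n A g \<rho> m) {Y. fidelity \<rho> \<psi> \<le> U_hat n m Y + \<epsilon>}
    \<ge> 1 - (\<Sum>i<n. exp (-2 * real (m i) * \<epsilon>^2))"
proof -
  define p where "p i = plus_prob n \<rho> (g_of n g (col A i))" for i
  define bad where "bad i = {Y. a_hat m Y i \<le> p i - \<epsilon>}" for i
  let ?\<Omega> = "outcomes n A g \<rho> m"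
  have \<psi>: "\<psi> \<in> carrier_vec (2^n)" "\<psi> \<bullet>c \<psi> = 1"
    using st by (simp_all add: stabilizer_state_def)
  have F_le_p: "fidelity \<rho> \<psi> \<le> p i" and p: "p i \<in> {0..1}" for i
    using fidelity_le_plus_prob[OF \<rho> \<psi>] plus_prob_le_one[OF \<rho>] fidelity_nonneg[OF \<rho> \<psi>(1)]
      stabilizer_state_g_of[OF st] unfolding p_def by (meson atLeastAtMost_iff order_trans)+
  have "UNIV - (\<Union>i<n. bad i) \<subseteq> {Y. fidelity \<rho> \<psi> \<le> U_hat n m Y + \<epsilon>}"
  proof
    fix Y assume "Y \<in> UNIV - (\<Union>i<n. bad i)"
    then have "\<not> a_hat m Y i \<le> p i - \<epsilon>" if "i < n" for i
      using that by (auto simp: bad_def)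
    then have "fidelity \<rho> \<psi> - \<epsilon> \<le> a_hat m Y i" if "i < n" for i
      using that F_le_p[of i] by force
    then have "fidelity \<rho> \<psi> - \<epsilon> \<le> U_hat n m Y"
      by (rule le_U_hat[OF n])
    then show "Y \<in> {Y. fidelity \<rho> \<psi> \<le> U_hat n m Y + \<epsilon>}"
      by simp
  qed
  then have "measure_pmf.prob ?\<Omega> (UNIV - (\<Union>i<n. bad i))
      \<le> measure_pmf.prob ?\<Omega> {Y. fidelity \<rho> \<psi> \<le> U_hat n m Y + \<epsilon>}"
    by (rule measure_pmf.finite_measure_mono) simp
  moreover have "measure_pmf.prob ?\<Omega> (UNIV - (\<Union>i<n. bad i)) = 1 - measure_pmf.prob ?\<Omega> (\<Union>i<n. bad i)"
    using measure_pmf.prob_compl[of "\<Union>i<n. bad i" ?\<Omega>] by simp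
  moreover have "measure_pmf.prob ?\<Omega> (\<Union>i<n. bad i) \<le> (\<Sum>i<n. measure_pmf.prob ?\<Omega> (bad i))"
    by (rule measure_pmf.finite_measure_subadditive_finite) auto
  moreover have "measure_pmf.prob ?\<Omega> (bad i) \<le> exp (-2 * real (m i) * \<epsilon>^2)" if "i < n" for i
    unfolding bad_def outcomes_def p_def[symmetric]
    using Pi_pmf_a_hat_lower_tail[where p = p and m = m, OF that _ p[of i] \<epsilon>] m that by simp
  then have "(\<Sum>i<n. measure_pmf.prob ?\<Omega> (bad i)) \<le> (\<Sum>i<n. exp (-2 * real (m i) * \<epsilon>^2))"
    by (intro sum_mono) simp
  ultimately show ?thesis
    by linarith
qed

lemma sum_exp_le_of_sample_size:
  fixes \<epsilon> t :: real
  assumes \<epsilon>: "0 < \<epsilon>" and t: "0 < t" and m: "\<forall>i<n. ln t / (2 * \<epsilon>^2) \<le> real (m i)"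
  shows "(\<Sum>i<n. exp (-2 * real (m i) * \<epsilon>^2)) \<le> real n / t"
proof -
  have "exp (-2 * real (m i) * \<epsilon>^2) \<le> 1 / t" if "i < n" for i
  proof -
    have "ln t \<le> 2 * real (m i) * \<epsilon>^2"
      using m that \<epsilon> by (simp add: field_simps)
    then have "exp (-2 * real (m i) * \<epsilon>^2) \<le> exp (- ln t)"
      by simp
    then show ?thesis
      using t by (simp add: exp_minus inverse_eq_divide)
  qed
  then have "(\<Sum>i<n. exp (-2 * real (m i) * \<epsilon>^2)) \<le> (\<Sum>i<n. 1 / t)"
    by (intro sum_mono) simp
  then show ?thesis
    by simp
qed

theorem corollary1:
  fixes n :: nat and A :: "bit mat" and g :: "nat \<Rightarrow> complex mat" and \<psi> :: "complex vec"
    and \<rho> :: "complex mat" and \<epsilon> \<delta> :: real and m :: "nat \<Rightarrow> nat"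
  assumes "n \<ge> 1"
    and "A \<in> carrier_mat n n" and "invertible_mat A"
    and "stabilizer_state n g \<psi>"
    and "density_matrix n \<rho>"
    and "\<epsilon> > 0" and "0 < \<delta>" and "\<delta> < 1"
    and "\<forall>i<n. int (m i) \<ge> \<lceil>ln (2 * real n / \<delta>) / (2 * \<epsilon>^2)\<rceil>"
  shows "measure_pmf.prob (outcomes n A g \<rho> m) {Y. fidelity \<rho> \<psi> \<le> U_hat n m Y + \<epsilon>} \<ge> 1 - \<delta>
    \<and> ((\<forall>i<n. int (m i) = \<lceil>ln (2 * real n / \<delta>) / (2 * \<epsilon>^2)\<rceil>)
          \<longrightarrow> (\<Sum>i<n. m i) = n * nat \<lceil>ln (2 * real n / \<delta>) / (2 * \<epsilon>^2)\<rceil>)"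
proof -
  note n = assms(1) and st = assms(4) and \<rho> = assms(5) and \<epsilon> = assms(6) and \<delta> = assms(7,8)
  define t where "t = 2 * real n / \<delta>"
  have t: "1 < t"
    using n \<delta> by (simp add: t_def field_simps)
  have m_ge: "\<forall>i<n. ln t / (2 * \<epsilon>^2) \<le> real (m i)"
    using assms(9) by (simp add: t_def ceiling_le_iff)
  moreover have "0 < ln t / (2 * \<epsilon>^2)"
    using t \<epsilon> by simp
  ultimately have m_pos: "\<forall>i<n. 0 < m i"
    by (metis of_nat_0_less_iff order_less_le_trans)
  have "(\<Sum>i<n. exp (-2 * real (m i) * \<epsilon>^2)) \<le> \<delta> / 2"
    using sum_exp_le_of_sample_size[OF \<epsilon> _ m_ge] t n \<delta> by (simp add: t_def)
  then have "measure_pmf.prob (outcomes n A g \<rho> m) {Y. fidelity \<rho> \<psi> \<le> U_hat n m Y + \<epsilon>} \<ge> 1 - \<delta>"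
    using prob_fidelity_le_U_hat[OF n st \<rho> _ m_pos, of \<epsilon> A] \<epsilon> \<delta> by simp
  moreover have "(\<Sum>i<n. m i) = n * nat \<lceil>ln (2 * real n / \<delta>) / (2 * \<epsilon>^2)\<rceil>"
    if "\<forall>i<n. int (m i) = \<lceil>ln (2 * real n / \<delta>) / (2 * \<epsilon>^2)\<rceil>"
  proof -
    have "\<forall>i<n. m i = nat \<lceil>ln (2 * real n / \<delta>) / (2 * \<epsilon>^2)\<rceil>"
      using that by (metis nat_int)
    then show ?thesis
      by simp
  qed
  ultimately show ?thesis
    by blast
qed

end
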